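(* Let $Q\in\mathbb{R}^{n\times n}$ be symmetric nonsingular with exactly one negative eigenvalue (and $n-1$ positive eigenvalues), and $A\in\mathbb{R}^{n\times n}$. Then the (nonconvex) set $\mathcal{C_L}\cup(-\mathcal{C_L})=\{x\in\mathbb{R}^n:x^TQx\le0\}$ is an invariant set for the discrete system $x_{k+1}=Ax_k$ (i.e., $x^TQx\le 0$ implies $(Ax)^TQ(Ax)\le0$) if and only if there exists $\mu\ge0$ such that $A^TQA-\mu Q\preceq0$.
   Context: Lorenz cone: for $Q$ symmetric nonsingular with eigenvalues $\lambda_1\ge\dots\ge\lambda_{n-1}>0>\lambda_n$ and orthonormal eigenvectors $u_1,\dots,u_n$ ($Qu_i=\lambda_iu_i$), $\mathcal{C_L}=\{x: x^TQx\le0,\ x^TQu_n\le0\}$. $\preceq0$ denotes negative semidefiniteness. *)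

theory Defs
  imports "HOL-Analysis.Analysis"
begin

text \<open>Q symmetric with eigenvalues lambda_1 >= ... >= lambda_(n-1) > 0 > lambda_n, given
  (as in the paper's setting) by an orthonormal eigenbasis u_i, Q u_i = lambda_i u_i.
  Counting eigenvalues with multiplicity: exactly one index has a negative eigenvalue,
  all others positive (hence Q nonsingular).\<close>
definition one_neg_rest_pos :: "real^'n^'n \<Rightarrow> bool" where
  "one_neg_rest_pos Q \<longleftrightarrow>
     (\<exists>(u :: 'n \<Rightarrow> real^'n) (lam :: 'n \<Rightarrow> real) (m :: 'n).
        (\<forall>i j. u i \<bullet> u j = (if i = j then 1 else 0)) \<and>
        (\<forall>i. Q *v u i = lam i *\<^sub>R u i) \<and>
        lam m < 0 \<and> (\<forall>i. i \<noteq> m \<longrightarrow> lam i > 0))"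

definition neg_semidef :: "real^'n^'n \<Rightarrow> bool" where
  "neg_semidef M \<longleftrightarrow> (\<forall>x. x \<bullet> (M *v x) \<le> 0)"

end

theory Submission
  imports Defs
begin

(* The theorem is an instance of the homogeneous S-lemma: for quadratic forms f, g on R^n,
   if f takes a negative value, then "f x <= 0 implies g x <= 0" holds iff g <= mu * f for some
   mu >= 0.  Only the existence of a direction with x^T Q x < 0 is used; it comes from the
   eigenvector of the negative eigenvalue of Q.

   A real quadratic whose leading and constant coefficients have opposite signs has two roots
   of opposite sign; applied to f along the line x + s z with f x > 0 > f z, this gives two
   points of the cone f = 0 with parameters of opposite sign, and evaluating g there gives the
   ratio bound g x / f x <= g z / f z.  Taking mu as the infimum of g z / f z over f z < 0 proves
   the S-lemma, and the theorem follows by rewriting A^T Q A - mu Q in terms of quadratic forms. *)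

definition quad_form :: "real^'n^'n \<Rightarrow> real^'n \<Rightarrow> real" where
  "quad_form M x = x \<bullet> (M *v x)"

lemma quad_form_add_scaled:
  "quad_form M (x + s *\<^sub>R z) =
     quad_form M x + s * (x \<bullet> (M *v z) + z \<bullet> (M *v x)) + s\<^sup>2 * quad_form M z"
  unfolding quad_form_def
  by (simp add: matrix_vector_right_distrib matrix_vector_mult_scaleR inner_add_left
      inner_add_right power2_eq_square algebra_simps)

lemma quad_form_congruence:
  "quad_form (transpose A ** Q ** A) x = quad_form Q (A *v x)"
proof -
  have "x \<bullet> ((transpose A ** Q ** A) *v x) = x \<bullet> (transpose A *v (Q *v (A *v x)))"
    by (simp add: matrix_vector_mul_assoc matrix_mul_assoc)
  also have "\<dots> = (A *v x) \<bullet> (Q *v (A *v x))"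
    by (metis dot_lmul_matrix vector_transpose_matrix)
  finally show ?thesis
    unfolding quad_form_def .
qed

lemma neg_semidef_diff_iff:
  "neg_semidef (P - \<mu> *\<^sub>R Q) \<longleftrightarrow> (\<forall>x. quad_form P x \<le> \<mu> * quad_form Q x)"
  unfolding neg_semidef_def quad_form_def
  by (simp add: matrix_vector_mult_diff_rdistrib scaleR_matrix_vector_assoc[symmetric]
      inner_diff_right)

lemma quadratic_roots_opposite_sign:
  fixes F c p :: real
  assumes "p > 0" and "F < 0"
  obtains s1 s2 where "F * s1\<^sup>2 + c * s1 + p = 0" and "F * s2\<^sup>2 + c * s2 + p = 0"
    and "s1 * s2 < 0"
proof -
  \<comment> \<open>Completing the square: a root is an s with (2 F s + c)^2 equal to the discriminant.\<close>
  have root: "F * s\<^sup>2 + c * s + p = 0" if "(2 * F * s + c)\<^sup>2 = c\<^sup>2 - 4 * p * F" for s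
  proof -
    have "4 * F * (F * s\<^sup>2 + c * s + p) = (2 * F * s + c)\<^sup>2 - (c\<^sup>2 - 4 * p * F)"
      by (simp add: algebra_simps power2_eq_square)
    then show ?thesis
      using that \<open>F < 0\<close> by simp
  qed
  define r where "r = sqrt (c\<^sup>2 - 4 * p * F)"
  have "c\<^sup>2 - 4 * p * F > 0"
    using assms by (smt (verit) mult_pos_neg zero_le_power2)
  then have r2: "r\<^sup>2 = c\<^sup>2 - 4 * p * F"
    unfolding r_def by simp
  define s1 where "s1 = (- c + r) / (2 * F)"
  define s2 where "s2 = (- c - r) / (2 * F)"
  have "2 * F * s1 + c = r" "2 * F * s2 + c = - r"
    using assms unfolding s1_def s2_def by (simp_all add: field_simps)
  then have roots: "F * s1\<^sup>2 + c * s1 + p = 0" "F * s2\<^sup>2 + c * s2 + p = 0"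
    using root r2 by simp_all
  have "s1 * s2 = (c\<^sup>2 - r\<^sup>2) / (4 * F\<^sup>2)"
    unfolding s1_def s2_def by (simp add: field_simps power2_eq_square)
  also have "\<dots> = p / F"
    using r2 \<open>F < 0\<close> by (simp add: power2_eq_square)
  finally have "s1 * s2 < 0"
    using assms by (simp add: divide_pos_neg)
  with roots show thesis
    using that by blast
qed

(* The line x + s z meets the cone
   Q = 0 at parameters s1, s2 of opposite sign; P <= 0 there forces the bound. *)
lemma cone_inclusion_ratio_bound:
  assumes cone: "\<forall>w. quad_form Q w \<le> 0 \<longrightarrow> quad_form P w \<le> 0"
    and x: "quad_form Q x > 0" and z: "quad_form Q z < 0"
  shows "quad_form P z * quad_form Q x \<le> quad_form P x * quad_form Q z"
proof -
  define p F cQ where "p = quad_form Q x" and "F = quad_form Q z"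
    and "cQ = x \<bullet> (Q *v z) + z \<bullet> (Q *v x)"
  define gx gz cP where "gx = quad_form P x" and "gz = quad_form P z"
    and "cP = x \<bullet> (P *v z) + z \<bullet> (P *v x)"
  define \<beta> where "\<beta> = cP * F - gz * cQ"
  have pF: "p > 0" "F < 0"
    using x z unfolding p_def F_def by auto
  have on_root: "gx * F - gz * p + s * \<beta> \<ge> 0" if root: "F * s\<^sup>2 + cQ * s + p = 0" for s
  proof -
    have "quad_form Q (x + s *\<^sub>R z) = 0"
      using root quad_form_add_scaled[of Q x s z] unfolding p_def F_def cQ_def
      by (simp add: algebra_simps)
    then have "quad_form P (x + s *\<^sub>R z) \<le> 0"
      using cone by simp
    then have "gx + s * cP + s\<^sup>2 * gz \<le> 0"
      using quad_form_add_scaled[of P x s z] unfolding gx_def gz_def cP_def by simp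
    then have "(gx + s * cP + s\<^sup>2 * gz) * F \<ge> 0"
      using pF by (simp add: mult_nonpos_nonpos)
    moreover have "(gx + s * cP + s\<^sup>2 * gz) * F
        = gx * F - gz * p + s * \<beta> + gz * (F * s\<^sup>2 + cQ * s + p)"
      unfolding \<beta>_def by (simp add: algebra_simps power2_eq_square)
    ultimately show ?thesis
      using root by simp
  qed
  obtain s1 s2 where r1: "F * s1\<^sup>2 + cQ * s1 + p = 0" and r2: "F * s2\<^sup>2 + cQ * s2 + p = 0"
    and opp: "s1 * s2 < 0"
    using quadratic_roots_opposite_sign[OF pF] by blast
  have "(s1 * \<beta>) * (s2 * \<beta>) \<le> 0"
    using opp by (metis mult.assoc mult.commute mult_nonpos_nonneg less_imp_le zero_le_square)
  then have "s1 * \<beta> \<le> 0 \<or> s2 * \<beta> \<le> 0"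
    by (smt (verit) mult_pos_pos)
  then have "gx * F - gz * p \<ge> 0"
    using on_root[OF r1] on_root[OF r2] by linarith
  then show ?thesis
    unfolding gx_def gz_def p_def F_def by simp
qed

(* The homogeneous S-lemma, for arbitrary (not necessarily symmetric) matrices, under the
   Slater-type condition that Q takes a negative value.  The multiplier is
   mu = inf { P(z)/Q(z) | Q(z) < 0 }. *)
lemma homogeneous_S_lemma:
  assumes slater: "quad_form Q z\<^sub>0 < 0"
  shows "(\<forall>x. quad_form Q x \<le> 0 \<longrightarrow> quad_form P x \<le> 0)
         \<longleftrightarrow> (\<exists>\<mu>\<ge>0. \<forall>x. quad_form P x \<le> \<mu> * quad_form Q x)"
proof
  assume cone: "\<forall>x. quad_form Q x \<le> 0 \<longrightarrow> quad_form P x \<le> 0"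
  define S where "S = (\<lambda>z. quad_form P z / quad_form Q z) ` {z. quad_form Q z < 0}"
  define \<mu> where "\<mu> = Inf S"
  have S_ne: "S \<noteq> {}"
    using slater unfolding S_def by auto
  have S_nonneg: "\<forall>s\<in>S. 0 \<le> s"
    using cone unfolding S_def by (auto intro!: divide_nonpos_neg)
  have "\<mu> \<ge> 0"
    unfolding \<mu>_def using S_ne S_nonneg by (simp add: cInf_greatest)
  moreover have "quad_form P x \<le> \<mu> * quad_form Q x" for x
  proof (cases "quad_form Q x" "0 :: real" rule: linorder_cases)
    case less
    have "bdd_below S"
      using S_nonneg by (auto intro: bdd_belowI)
    then have "\<mu> \<le> quad_form P x / quad_form Q x"
      unfolding \<mu>_def S_def using less by (auto intro!: cInf_lower)
    then show ?thesis
      using less by (simp add: le_divide_eq mult.commute)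
  next
    case equal
    then show ?thesis
      using cone by simp
  next
    case greater
    have "quad_form P x / quad_form Q x \<le> \<mu>"
      unfolding \<mu>_def
    proof (rule cInf_greatest[OF S_ne])
      fix s assume "s \<in> S"
      then obtain z where z: "quad_form Q z < 0" "s = quad_form P z / quad_form Q z"
        unfolding S_def by auto
      then show "quad_form P x / quad_form Q x \<le> s"
        using cone_inclusion_ratio_bound[OF cone greater z(1)] greater
        by (simp add: divide_le_eq le_divide_eq)
    qed
    then show ?thesis
      using greater by (simp add: divide_le_eq mult.commute)
  qed
  ultimately show "\<exists>\<mu>\<ge>0. \<forall>x. quad_form P x \<le> \<mu> * quad_form Q x"
    by blast
next
  assume "\<exists>\<mu>\<ge>0. \<forall>x. quad_form P x \<le> \<mu> * quad_form Q x"
  then show "\<forall>x. quad_form Q x \<le> 0 \<longrightarrow> quad_form P x \<le> 0"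
    by (smt (verit) mult_nonneg_nonpos)
qed

(* The eigenvector of the negative eigenvalue is a direction where Q is negative. *)
lemma one_neg_rest_pos_has_negative_direction:
  assumes "one_neg_rest_pos Q"
  obtains z where "quad_form Q z < 0"
proof -
  obtain u :: "'a \<Rightarrow> real^'a" and lam m
    where "\<forall>i j. u i \<bullet> u j = (if i = j then 1 else 0)"
      and "\<forall>i. Q *v u i = lam i *\<^sub>R u i" and "lam m < 0"
    using assms unfolding one_neg_rest_pos_def by metis
  then have "quad_form Q (u m) < 0"
    unfolding quad_form_def by simp
  then show thesis using that by blast
qed

theorem theorem3p16:
  fixes Q A :: "real^'n^'n"
  assumes "transpose Q = Q"
    and "invertible Q"
    and "one_neg_rest_pos Q"
  shows "(\<forall>x. x \<bullet> (Q *v x) \<le> 0 \<longrightarrow> (A *v x) \<bullet> (Q *v (A *v x)) \<le> 0)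
         \<longleftrightarrow> (\<exists>\<mu>::real. \<mu> \<ge> 0 \<and> neg_semidef (transpose A ** Q ** A - \<mu> *\<^sub>R Q))"
proof -
  obtain z where "quad_form Q z < 0"
    using one_neg_rest_pos_has_negative_direction[OF assms(3)] .
  from homogeneous_S_lemma[OF this, of "transpose A ** Q ** A"]
  show ?thesis
    unfolding neg_semidef_diff_iff quad_form_congruence by (simp add: quad_form_def)
qed

end
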